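(* Assume $F$ is $K$-smooth with $\ell\in\mathrm{int}(K)$, let $e\in\mathrm{int}(K)$ and $\gamma\in(0,1)$. In Algorithm 6 (with arbitrary choices $e_k\in\mathrm{int}(K)$), every stepsize satisfies $$t_k\ge\min\Big\{\min_{c^*\in C_e}\frac{\gamma\langle c^*,e_k\rangle}{\langle c^*,\ell\rangle},\,1\Big\}.$$
   Context: $K\subset\mathbb{R}^m$ closed convex pointed cone with nonempty interior; $y\preceq_K y'$ iff $y'-y\in K$. $K^*=\{c:\langle c,y\rangle\ge0\ \forall y\in K\}$; $C_e:=\{c^*\in K^*:\langle c^*,e\rangle=1\}$. $F:\mathbb{R}^n\to\mathbb{R}^m$ differentiable with Jacobian $JF$; $K$-smooth with $\ell$: $F(y)-F(x)\preceq_K JF(x)(y-x)+\tfrac12\|y-x\|^2\ell$ $\forall x,y$. Algorithm 6 (generic first-order method): given $x^0$, $\gamma\in(0,1)$, for $k=0,1,\dots$: choose $e_k\in\mathrm{int}(K)$; $d^k:=\arg\min_d\max_{c^*\in C_e}\langle c^*,JF(x^k)d+\tfrac12\|d\|^2e_k\rangle$; if $d^k=0$ stop; otherwise $t_k:=\max\{\gamma^j:j\in\mathbb{N},\ F(x^k+\gamma^jd^k)-F(x^k)\preceq_K\gamma^j(JF(x^k)d^k+\tfrac12\|d^k\|^2e_k)\}$, $x^{k+1}:=x^k+t_kd^k$. *)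

theory Defs
  imports "HOL-Analysis.Analysis"
begin

definition Kle :: "(real^'m) set \<Rightarrow> real^'m \<Rightarrow> real^'m \<Rightarrow> bool" where
  "Kle K y y' \<longleftrightarrow> y' - y \<in> K"

definition dual_cone :: "(real^'m) set \<Rightarrow> (real^'m) set" where
  "dual_cone K = {c. \<forall>y\<in>K. 0 \<le> c \<bullet> y}"

definition Ce :: "(real^'m) set \<Rightarrow> real^'m \<Rightarrow> (real^'m) set" where
  "Ce K e = {c \<in> dual_cone K. c \<bullet> e = 1}"

definition proper_cone :: "(real^'m) set \<Rightarrow> bool" where
  "proper_cone K \<longleftrightarrow> closed K \<and> convex K \<and> cone K \<and>
     (\<forall>y. y \<in> K \<and> - y \<in> K \<longrightarrow> y = 0) \<and> interior K \<noteq> {}"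

definition K_smooth :: "(real^'m) set \<Rightarrow> (real^'n \<Rightarrow> real^'m) \<Rightarrow> (real^'n \<Rightarrow> real^'n^'m)
    \<Rightarrow> real^'m \<Rightarrow> bool" where
  "K_smooth K F JF l \<longleftrightarrow> (\<forall>x y. Kle K (F y - F x)
      (JF x *v (y - x) + ((1/2) * (norm (y - x))^2) *\<^sub>R l))"

definition subprob :: "(real^'m) set \<Rightarrow> real^'m \<Rightarrow> real^'n^'m \<Rightarrow> real^'m \<Rightarrow> real^'n \<Rightarrow> real" where
  "subprob K e J ek d = (SUP c\<in>Ce K e. c \<bullet> (J *v d + ((1/2) * (norm d)^2) *\<^sub>R ek))"

definition armijo_ok :: "(real^'m) set \<Rightarrow> (real^'n \<Rightarrow> real^'m) \<Rightarrow> real^'n^'m \<Rightarrow> real^'m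
    \<Rightarrow> real^'n \<Rightarrow> real^'n \<Rightarrow> real \<Rightarrow> bool" where
  "armijo_ok K F J ek x d s \<longleftrightarrow>
     Kle K (F (x + s *\<^sub>R d) - F x) (s *\<^sub>R (J *v d + ((1/2) * (norm d)^2) *\<^sub>R ek))"

definition armijo_step :: "real \<Rightarrow> (real^'m) set \<Rightarrow> (real^'n \<Rightarrow> real^'m) \<Rightarrow> real^'n^'m
    \<Rightarrow> real^'m \<Rightarrow> real^'n \<Rightarrow> real^'n \<Rightarrow> real" where
  "armijo_step \<gamma> K F J ek x d = Sup {\<gamma> ^ j | j::nat. armijo_ok K F J ek x d (\<gamma> ^ j)}"

end

theory Submission
  imports Defs
begin

text \<open>The Armijo condition at a trial step \<open>s\<close> is implied by \<open>e\<^sub>k - s \<ell> \<in> K\<close>: the \<open>K\<close>-smoothness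
  bound at \<open>x + s d\<close> differs from the Armijo right-hand side by
  \<open>(s/2) \<parallel>d\<parallel>\<^sup>2 (e\<^sub>k - s \<ell>)\<close>. By separation, \<open>e\<^sub>k - s \<ell> \<in> K\<close> holds as soon as
  \<open>s \<le> \<langle>c, e\<^sub>k\<rangle> / \<langle>c, \<ell>\<rangle>\<close> for every \<open>c \<in> C\<^sub>e\<close>, and these ratios are bounded below by a
  positive constant because \<open>e\<^sub>k\<close> is interior. Backtracking from \<open>1\<close> by the factor \<open>\<gamma>\<close>
  therefore accepts a step no smaller than \<open>\<gamma>\<close> times the infimum of these ratios.\<close>

lemma proper_cone_add: "proper_cone K \<Longrightarrow> a \<in> K \<Longrightarrow> b \<in> K \<Longrightarrow> a + b \<in> K"
  unfolding proper_cone_def using convex_cone by blast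

lemma proper_cone_scaleR: "proper_cone K \<Longrightarrow> a \<in> K \<Longrightarrow> 0 \<le> c \<Longrightarrow> c *\<^sub>R a \<in> K"
  unfolding proper_cone_def cone_def by blast

lemma proper_cone_separation:
  assumes K: "proper_cone K" and z: "z \<notin> K"
  obtains c where "c \<in> dual_cone K" "c \<bullet> z < 0"
proof -
  from K have "convex K" "closed K" "interior K \<noteq> {}"
    unfolding proper_cone_def by auto
  obtain a b where ab: "a \<bullet> z < b" "\<forall>y\<in>K. b < a \<bullet> y"
    using separating_hyperplane_closed_point[OF \<open>convex K\<close> \<open>closed K\<close> z] by blast
  obtain p where "p \<in> K" using \<open>interior K \<noteq> {}\<close> interior_subset by blast
  then have "0 \<in> K" using proper_cone_scaleR[OF K, of p 0] by simp
  with ab have b_neg: "b < 0" by force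
  have "0 \<le> a \<bullet> y" if y: "y \<in> K" for y
  proof (rule ccontr)
    assume "\<not> 0 \<le> a \<bullet> y"
    then have neg: "a \<bullet> y < 0" by simp
    \<comment> \<open>rescale \<open>y\<close> onto the separating hyperplane\<close>
    have "(b / (a \<bullet> y)) *\<^sub>R y \<in> K"
      using proper_cone_scaleR[OF K y] neg b_neg by (simp add: divide_nonpos_neg)
    then have "b < a \<bullet> ((b / (a \<bullet> y)) *\<^sub>R y)" using ab by blast
    then show False using neg by simp
  qed
  then have "a \<in> dual_cone K" unfolding dual_cone_def by blast
  with ab b_neg show thesis using that by force
qed

lemma dual_cone_inner_interior_pos:
  assumes c: "c \<in> dual_cone K" "c \<noteq> 0" and p: "p \<in> interior K"
  shows "0 < c \<bullet> p"
proof -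
  obtain \<epsilon> where \<epsilon>: "\<epsilon> > 0" "ball p \<epsilon> \<subseteq> K"
    using p by (meson mem_interior)
  define y where "y = p - (\<epsilon>/2 / norm c) *\<^sub>R c"
  have "dist p y < \<epsilon>" unfolding y_def dist_norm using \<epsilon> c by simp
  then have "y \<in> K" using \<epsilon> by auto
  then have "0 \<le> c \<bullet> y" using c unfolding dual_cone_def by auto
  also have "c \<bullet> y = c \<bullet> p - \<epsilon>/2 * norm c"
    unfolding y_def using c
    by (simp add: inner_diff_right power2_norm_eq_inner[symmetric] power2_eq_square)
  finally have "\<epsilon>/2 * norm c \<le> c \<bullet> p" by simp
  moreover have "0 < \<epsilon>/2 * norm c" using \<epsilon> c by simp
  ultimately show ?thesis by linarith
qed

lemma Ce_inner_interior_pos: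
  "c \<in> Ce K e \<Longrightarrow> p \<in> interior K \<Longrightarrow> 0 < c \<bullet> p"
  unfolding Ce_def by (auto intro: dual_cone_inner_interior_pos)

lemma mem_proper_cone_iff_Ce:
  assumes K: "proper_cone K" and e: "e \<in> interior K"
  shows "z \<in> K \<longleftrightarrow> (\<forall>c\<in>Ce K e. 0 \<le> c \<bullet> z)"
proof
  show "z \<in> K \<Longrightarrow> \<forall>c\<in>Ce K e. 0 \<le> c \<bullet> z"
    unfolding Ce_def dual_cone_def by auto
next
  assume nonneg: "\<forall>c\<in>Ce K e. 0 \<le> c \<bullet> z"
  show "z \<in> K"
  proof (rule ccontr)
    assume "z \<notin> K"
    then obtain c where c: "c \<in> dual_cone K" "c \<bullet> z < 0"
      using proper_cone_separation[OF K] by blast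
    then have ce: "0 < c \<bullet> e"
      using dual_cone_inner_interior_pos[OF c(1) _ e] by force
    have "(1 / (c \<bullet> e)) *\<^sub>R c \<in> Ce K e"
      using c(1) ce unfolding Ce_def dual_cone_def by auto
    with nonneg c(2) ce show False by (auto simp: field_simps)
  qed
qed

lemma Ce_nonempty:
  assumes K: "proper_cone K" and e: "e \<in> interior K"
  shows "Ce K e \<noteq> {}"
proof
  assume "Ce K e = {}"
  then have "y \<in> K" for y using mem_proper_cone_iff_Ce[OF K e] by blast
  then have "y = 0" for y :: "real^'a" using K unfolding proper_cone_def by blast
  moreover have "axis undefined 1 \<noteq> (0 :: real^'a)" by (simp add: axis_eq_0_iff)
  ultimately show False by blast
qed

lemma interior_minus_scaleR_mem:
  fixes p l :: "real^'m"
  assumes p: "p \<in> interior K"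
  obtains r where "r > 0" "p - r *\<^sub>R l \<in> K"
proof -
  obtain \<epsilon> where \<epsilon>: "\<epsilon> > 0" "ball p \<epsilon> \<subseteq> K"
    using p by (meson mem_interior)
  define r where "r = \<epsilon> / (2 * (norm l + 1))"
  have r: "r > 0" unfolding r_def using \<epsilon> by (simp add: add_nonneg_pos)
  have "0 < 2 * (norm l + 1)" by (simp add: add_nonneg_pos)
  have "norm (r *\<^sub>R l) \<le> r * (norm l + 1)" using r by simp
  also have "\<dots> = \<epsilon> / 2" unfolding r_def using \<open>0 < 2 * (norm l + 1)\<close> by (simp add: field_simps)
  also have "\<dots> < \<epsilon>" using \<epsilon> by simp
  finally have "p - r *\<^sub>R l \<in> ball p \<epsilon>" by (simp add: dist_norm)
  then show thesis using that \<epsilon> r by blast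
qed

lemma minus_scaleR_mem_iff_Ce_ratio:
  assumes K: "proper_cone K" and e: "e \<in> interior K" and l: "l \<in> interior K"
  shows "p - s *\<^sub>R l \<in> K \<longleftrightarrow> (\<forall>c\<in>Ce K e. s \<le> (c \<bullet> p) / (c \<bullet> l))"
proof -
  have "0 \<le> c \<bullet> (p - s *\<^sub>R l) \<longleftrightarrow> s \<le> (c \<bullet> p) / (c \<bullet> l)" if "c \<in> Ce K e" for c
    using Ce_inner_interior_pos[OF that l] by (simp add: inner_diff_right field_simps)
  then show ?thesis using mem_proper_cone_iff_Ce[OF K e] by auto
qed

lemma armijo_ok_if_minus_scaleR_mem:
  assumes K: "proper_cone K" and smooth: "K_smooth K F JF l"
    and s: "0 < s" and mem: "ek - s *\<^sub>R l \<in> K"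
  shows "armijo_ok K F (JF x) ek x d s"
proof -
  let ?y = "x + s *\<^sub>R d"
  have smooth_gap: "(JF x *v (s *\<^sub>R d) + ((1/2) * (norm (s *\<^sub>R d))^2) *\<^sub>R l)
      - (F ?y - F x) \<in> K"
    using smooth unfolding K_smooth_def Kle_def by (metis add_diff_cancel_left')
  have slack: "(s/2 * (norm d)^2) *\<^sub>R (ek - s *\<^sub>R l) \<in> K"
    using proper_cone_scaleR[OF K mem] s by simp
  have gap_eq: "s *\<^sub>R (JF x *v d + ((1/2) * (norm d)^2) *\<^sub>R ek) - (F ?y - F x)
     = ((JF x *v (s *\<^sub>R d) + ((1/2) * (norm (s *\<^sub>R d))^2) *\<^sub>R l) - (F ?y - F x))
       + (s/2 * (norm d)^2) *\<^sub>R (ek - s *\<^sub>R l)"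
    using s by (simp add: matrix_vector_mult_scaleR algebra_simps power2_eq_square)
  show ?thesis
    unfolding armijo_ok_def Kle_def gap_eq using proper_cone_add[OF K smooth_gap slack] .
qed

lemma backtracking_Sup_lower_bound:
  fixes \<gamma> \<mu> :: real
  assumes \<gamma>: "0 < \<gamma>" "\<gamma> < 1" and \<mu>: "0 < \<mu>"
    and accept: "\<And>s. 0 < s \<Longrightarrow> s \<le> \<mu> \<Longrightarrow> P s"
  shows "min (\<gamma> * \<mu>) 1 \<le> Sup {\<gamma> ^ j | j::nat. P (\<gamma> ^ j)}"
proof -
  let ?S = "{\<gamma> ^ j | j::nat. P (\<gamma> ^ j)}"
  have bdd: "bdd_above ?S"
    using \<gamma> by (intro bdd_aboveI[of _ 1]) (auto intro: power_le_one)
  have in_S: "\<gamma> ^ j \<le> Sup ?S" if "\<gamma> ^ j \<le> \<mu>" for j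
    using that \<gamma> accept[of "\<gamma> ^ j"] by (intro cSup_upper[OF _ bdd]) auto
  show ?thesis
  proof (cases "1 \<le> \<mu>")
    case True
    then show ?thesis using in_S[of 0] by simp
  next
    case False
    obtain n where "\<gamma> ^ n < \<mu>" using real_arch_pow_inv[OF \<mu> \<gamma>(2)] by blast
    define j where "j = (LEAST j. \<gamma> ^ j \<le> \<mu>)"
    have j_le: "\<gamma> ^ j \<le> \<mu>"
      unfolding j_def by (rule LeastI[of "\<lambda>j. \<gamma> ^ j \<le> \<mu>" n]) (use \<open>\<gamma> ^ n < \<mu>\<close> in simp)
    have "j \<noteq> 0" using j_le False by (metis power_0)
    then obtain i where j: "j = Suc i" using not0_implies_Suc by blast
    have "\<not> \<gamma> ^ i \<le> \<mu>" using not_less_Least[of i "\<lambda>j. \<gamma> ^ j \<le> \<mu>"] j unfolding j_def by simp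
    then have "\<gamma> * \<mu> \<le> \<gamma> ^ j" using j \<gamma> by simp
    then show ?thesis using in_S[OF j_le] by linarith
  qed
qed

theorem mainTheorem12:
  fixes K :: "(real^'m) set"
    and F :: "real^'n \<Rightarrow> real^'m"
    and JF :: "real^'n \<Rightarrow> real^'n^'m"
    and l e :: "real^'m"
    and \<gamma> :: real
    and x :: "nat \<Rightarrow> real^'n"
    and ek :: "nat \<Rightarrow> real^'m"
    and d :: "nat \<Rightarrow> real^'n"
    and t :: "nat \<Rightarrow> real"
  assumes K: "proper_cone K"
    and deriv: "\<And>z. (F has_derivative (\<lambda>h. JF z *v h)) (at z)"
    and smooth: "K_smooth K F JF l"
    and l_int: "l \<in> interior K"
    and e_int: "e \<in> interior K"
    and gamma: "0 < \<gamma>" "\<gamma> < 1"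
    and ek_int: "\<And>k. ek k \<in> interior K"
    and d_def: "\<And>k. d k = (ARG_MIN (subprob K e (JF (x k)) (ek k)) dd. True)"
    and t_def: "\<And>k. t k = armijo_step \<gamma> K F (JF (x k)) (ek k) (x k) (d k)"
    and x_def: "\<And>k. x (Suc k) = x k + t k *\<^sub>R d k"
  shows "\<And>k. d k \<noteq> 0 \<Longrightarrow>
           min (INF c\<in>Ce K e. \<gamma> * (c \<bullet> ek k) / (c \<bullet> l)) 1 \<le> t k"
proof -
  fix k
  define m where "m = (INF c\<in>Ce K e. \<gamma> * (c \<bullet> ek k) / (c \<bullet> l))"
  note ratio_iff = minus_scaleR_mem_iff_Ce_ratio[OF K e_int l_int]
  obtain r where r: "r > 0" "ek k - r *\<^sub>R l \<in> K"
    using interior_minus_scaleR_mem[OF ek_int] by blast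
  have lower: "\<gamma> * r \<le> \<gamma> * (c \<bullet> ek k) / (c \<bullet> l)" if "c \<in> Ce K e" for c
  proof -
    have "r \<le> (c \<bullet> ek k) / (c \<bullet> l)" using r(2) that unfolding ratio_iff by blast
    then show ?thesis using gamma by (simp add: mult_left_mono flip: times_divide_eq_right)
  qed
  then have bdd: "bdd_below ((\<lambda>c. \<gamma> * (c \<bullet> ek k) / (c \<bullet> l)) ` Ce K e)"
    by (rule bdd_belowI2)
  have "\<gamma> * r \<le> m"
    unfolding m_def using Ce_nonempty[OF K e_int] lower by (rule cINF_greatest)
  then have m_pos: "0 < m / \<gamma>" using r gamma by (smt (verit) divide_pos_pos mult_pos_pos)
  have "armijo_ok K F (JF (x k)) (ek k) (x k) (d k) s" if "0 < s" "s \<le> m / \<gamma>" for s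
  proof (rule armijo_ok_if_minus_scaleR_mem[OF K smooth \<open>0 < s\<close>])
    have "s \<le> (c \<bullet> ek k) / (c \<bullet> l)" if "c \<in> Ce K e" for c
    proof -
      have "\<gamma> * s \<le> m" using \<open>s \<le> m / \<gamma>\<close> gamma by (simp add: field_simps)
      also have "m \<le> \<gamma> * ((c \<bullet> ek k) / (c \<bullet> l))"
        unfolding m_def using cINF_lower[OF bdd that] by simp
      finally show ?thesis using gamma by (simp flip: times_divide_eq_right)
    qed
    then show "ek k - s *\<^sub>R l \<in> K" unfolding ratio_iff by blast
  qed
  from backtracking_Sup_lower_bound[OF gamma m_pos this]
  show "min m 1 \<le> t k" unfolding t_def armijo_step_def using gamma by simp
qed

end
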